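(* For every multifield morphism $\sigma:F\to K$ between special multifields, the restriction $\sigma|_{F^\bullet}:F^\bullet\to K^\bullet$ is a morphism of special groups (where $F^\bullet$, $K^\bullet$ carry the special group structures $\langle a,b\rangle\equiv\langle c,d\rangle$ iff $ab=cd$ and $a\in c+d$); the assignments $F\mapsto F^\bullet$, $\sigma\mapsto\sigma|_{F^\bullet}$ define a functor $S$ from the category $\mathcal{SMF}$ of special multifields to the category $\mathcal{SG}$ of special groups.
   Context: A multiring is a tuple $(R,+,\cdot,-,0,1)$ with $+:R\times R\to\mathcal P(R)\setminus\{\emptyset\}$ satisfying: $z\in x+y\Rightarrow x\in z+(-y)$ and $y\in(-x)+z$; $y\in0+x\iff y=x$; $+$ associative and commutative; $(R,\cdot,1)$ a commutative monoid; $a0=0$; $c\in a+b\Rightarrow cd\in ad+bd$. A multifield has every nonzero element invertible. A multiring morphism $f$ satisfies $c\in a+b\Rightarrow f(c)\in f(a)+f(b)$, $f(-a)=-f(a)$, $f(0)=0$, $f(ab)=f(a)f(b)$, $f(1)=1$. A special multifield is a multifield $F$ such that, with $F^\bullet=F\setminus\{0\}$: (i) $a^2=1$ for $a\in F^\bullet$; (ii) $a+(-a)=F$ for $a\in F^\bullet$; (iii) $ab=cd$ and $a\in c+d$ imply $c\in a+b$ ($a,b,c,d\in F^\bullet$); (iv) $ab=cd=ef$, $a\in c+d$, $c\in e+f$ imply $a\in e+f$; (v) if there are $x,y,z\in F^\bullet$ with $ax=cy$, $a=xz$, $c=yz$, $a\in c+y$, $b\in x+z$, $d\in y+z$, then there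 are $t,v,w\in F^\bullet$ with $bt=cv$, $b=tw$, $c=vw$, $b\in c+v$, $a\in t+w$, $d\in v+w$. $\mathcal{SMF}$ has special multifields as objects and multiring morphisms as morphisms. A special group is $(G,-1,\equiv)$ with $G$ a group of exponent 2, $-1\in G$, $\equiv$ a relation on $G\times G$ satisfying: (SG0) equivalence relation; (SG1) $\langle a,b\rangle\equiv\langle b,a\rangle$; (SG2) $\langle a,-a\rangle\equiv\langle1,-1\rangle$; (SG3) $\langle a,b\rangle\equiv\langle c,d\rangle\Rightarrow ab=cd$; (SG4) $\langle a,b\rangle\equiv\langle c,d\rangle\Rightarrow\langle a,-c\rangle\equiv\langle -b,d\rangle$; (SG5) $\langle a,b\rangle\equiv\langle c,d\rangle\Rightarrow\langle ga,gb\rangle\equiv\langle gc,gd\rangle$; (SG6) the relation on $G^3$ given by $\langle a_1,a_2,a_3\rangle\equiv\langle b_1,b_2,b_3\rangle$ iff $\exists x,y,z$ with $\langle a_1,x\rangle\equiv\langle b_1,y\rangle$, $\langle a_2,a_3\rangle\equiv\langle x,z\rangle$, $\langle b_2,b_3\rangle\equiv\langle y,z\rangle$ is transitive. A morphism of special groups $f:G\to H$ is a group homomorphism with $f(-1)=-1$ and $\langle a,b\rangle\equiv_G\langle c,d\rangle\Rightarrow\langle f(a),f(b)\rangle\equiv_H\langle f(c),f(d)\rangle$. *)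

theory Defs
  imports Main
begin

record 'a mring =
  mcarrier :: "'a set"
  madd :: "'a \<Rightarrow> 'a \<Rightarrow> 'a set"
  mneg :: "'a \<Rightarrow> 'a"
  mmul :: "'a \<Rightarrow> 'a \<Rightarrow> 'a"
  mzero :: 'a
  mone :: 'a

definition set_add :: "('a, 'b) mring_scheme \<Rightarrow> 'a set \<Rightarrow> 'a \<Rightarrow> 'a set" where
  "set_add R A c = (\<Union>a\<in>A. madd R a c)"

definition add_set :: "('a, 'b) mring_scheme \<Rightarrow> 'a \<Rightarrow> 'a set \<Rightarrow> 'a set" where
  "add_set R a B = (\<Union>b\<in>B. madd R a b)"

definition multiring :: "('a, 'b) mring_scheme \<Rightarrow> bool" where
  "multiring R \<longleftrightarrow>
     (let C = mcarrier R; P = madd R; N = mneg R; M = mmul R; Z = mzero R; U = mone R in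
      (\<forall>a\<in>C. \<forall>b\<in>C. P a b \<noteq> {} \<and> P a b \<subseteq> C) \<and>
      (\<forall>a\<in>C. N a \<in> C) \<and> Z \<in> C \<and> U \<in> C \<and>
      (\<forall>a\<in>C. \<forall>b\<in>C. M a b \<in> C) \<and>
      (\<forall>x\<in>C. \<forall>y\<in>C. \<forall>z\<in>C. z \<in> P x y \<longrightarrow> x \<in> P z (N y) \<and> y \<in> P (N x) z) \<and>
      (\<forall>x\<in>C. \<forall>y\<in>C. y \<in> P Z x \<longleftrightarrow> y = x) \<and>
      (\<forall>a\<in>C. \<forall>b\<in>C. \<forall>c\<in>C. set_add R (P a b) c = add_set R a (P b c)) \<and>
      (\<forall>a\<in>C. \<forall>b\<in>C. P a b = P b a) \<and>
      (\<forall>a\<in>C. \<forall>b\<in>C. \<forall>c\<in>C. M (M a b) c = M a (M b c)) \<and>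
      (\<forall>a\<in>C. \<forall>b\<in>C. M a b = M b a) \<and>
      (\<forall>a\<in>C. M a U = a) \<and>
      (\<forall>a\<in>C. M a Z = Z) \<and>
      (\<forall>a\<in>C. \<forall>b\<in>C. \<forall>c\<in>C. \<forall>d\<in>C. c \<in> P a b \<longrightarrow> M c d \<in> P (M a d) (M b d)))"

definition multifield :: "('a, 'b) mring_scheme \<Rightarrow> bool" where
  "multifield F \<longleftrightarrow> multiring F \<and> mone F \<noteq> mzero F \<and>
     (\<forall>a\<in>mcarrier F. a \<noteq> mzero F \<longrightarrow> (\<exists>b\<in>mcarrier F. mmul F a b = mone F))"

definition nonzeros :: "('a, 'b) mring_scheme \<Rightarrow> 'a set" where
  "nonzeros F = mcarrier F - {mzero F}"

definition special_multifield :: "('a, 'b) mring_scheme \<Rightarrow> bool" where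
  "special_multifield F \<longleftrightarrow> multifield F \<and>
     (let G = nonzeros F; P = madd F; N = mneg F; M = mmul F; U = mone F in
      (\<forall>a\<in>G. M a a = U) \<and>
      (\<forall>a\<in>G. P a (N a) = mcarrier F) \<and>
      (\<forall>a\<in>G. \<forall>b\<in>G. \<forall>c\<in>G. \<forall>d\<in>G. M a b = M c d \<and> a \<in> P c d \<longrightarrow> c \<in> P a b) \<and>
      (\<forall>a\<in>G. \<forall>b\<in>G. \<forall>c\<in>G. \<forall>d\<in>G. \<forall>e\<in>G. \<forall>f\<in>G.
          M a b = M c d \<and> M c d = M e f \<and> a \<in> P c d \<and> c \<in> P e f \<longrightarrow> a \<in> P e f) \<and>
      (\<forall>a\<in>G. \<forall>b\<in>G. \<forall>c\<in>G. \<forall>d\<in>G.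
          (\<exists>x\<in>G. \<exists>y\<in>G. \<exists>z\<in>G. M a x = M c y \<and> a = M x z \<and> c = M y z \<and>
                 a \<in> P c y \<and> b \<in> P x z \<and> d \<in> P y z) \<longrightarrow>
          (\<exists>t\<in>G. \<exists>v\<in>G. \<exists>w\<in>G. M b t = M c v \<and> b = M t w \<and> c = M v w \<and>
                 b \<in> P c v \<and> a \<in> P t w \<and> d \<in> P v w)))"

definition mr_hom :: "('a, 'c) mring_scheme \<Rightarrow> ('b, 'd) mring_scheme \<Rightarrow> ('a \<Rightarrow> 'b) \<Rightarrow> bool" where
  "mr_hom F K f \<longleftrightarrow>
     (\<forall>a\<in>mcarrier F. f a \<in> mcarrier K) \<and>
     (\<forall>a\<in>mcarrier F. \<forall>b\<in>mcarrier F. \<forall>c\<in>mcarrier F.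
        c \<in> madd F a b \<longrightarrow> f c \<in> madd K (f a) (f b)) \<and>
     (\<forall>a\<in>mcarrier F. f (mneg F a) = mneg K (f a)) \<and>
     f (mzero F) = mzero K \<and>
     (\<forall>a\<in>mcarrier F. \<forall>b\<in>mcarrier F. f (mmul F a b) = mmul K (f a) (f b)) \<and>
     f (mone F) = mone K"

record 'a sgroup =
  scarrier :: "'a set"
  smul :: "'a \<Rightarrow> 'a \<Rightarrow> 'a"
  sone :: 'a
  sminus :: 'a
  seqv :: "'a \<Rightarrow> 'a \<Rightarrow> 'a \<Rightarrow> 'a \<Rightarrow> bool"  \<comment> \<open>seqv a b c d means <a,b> == <c,d>\<close>

definition sg_tern :: "('a, 'b) sgroup_scheme \<Rightarrow> 'a \<Rightarrow> 'a \<Rightarrow> 'a \<Rightarrow> 'a \<Rightarrow> 'a \<Rightarrow> 'a \<Rightarrow> bool" where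
  "sg_tern G a1 a2 a3 b1 b2 b3 \<longleftrightarrow>
     (\<exists>x\<in>scarrier G. \<exists>y\<in>scarrier G. \<exists>z\<in>scarrier G.
        seqv G a1 x b1 y \<and> seqv G a2 a3 x z \<and> seqv G b2 b3 y z)"

definition special_group :: "('a, 'b) sgroup_scheme \<Rightarrow> bool" where
  "special_group G \<longleftrightarrow>
    (let S = scarrier G; m = smul G; e = sone G; n = sminus G; E = seqv G in
     \<comment> \<open>group of exponent 2\<close>
     (\<forall>a\<in>S. \<forall>b\<in>S. m a b \<in> S) \<and> e \<in> S \<and>
     (\<forall>a\<in>S. \<forall>b\<in>S. \<forall>c\<in>S. m (m a b) c = m a (m b c)) \<and>
     (\<forall>a\<in>S. m e a = a \<and> m a e = a) \<and>
     (\<forall>a\<in>S. m a a = e) \<and>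
     n \<in> S \<and>
     \<comment> \<open>SG0: equivalence relation on S x S\<close>
     (\<forall>a\<in>S. \<forall>b\<in>S. E a b a b) \<and>
     (\<forall>a\<in>S. \<forall>b\<in>S. \<forall>c\<in>S. \<forall>d\<in>S. E a b c d \<longrightarrow> E c d a b) \<and>
     (\<forall>a\<in>S. \<forall>b\<in>S. \<forall>c\<in>S. \<forall>d\<in>S. \<forall>p\<in>S. \<forall>q\<in>S. E a b c d \<and> E c d p q \<longrightarrow> E a b p q) \<and>
     \<comment> \<open>SG1\<close>
     (\<forall>a\<in>S. \<forall>b\<in>S. E a b b a) \<and>
     \<comment> \<open>SG2\<close>
     (\<forall>a\<in>S. E a (m n a) e n) \<and>
     \<comment> \<open>SG3\<close>
     (\<forall>a\<in>S. \<forall>b\<in>S. \<forall>c\<in>S. \<forall>d\<in>S. E a b c d \<longrightarrow> m a b = m c d) \<and>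
     \<comment> \<open>SG4\<close>
     (\<forall>a\<in>S. \<forall>b\<in>S. \<forall>c\<in>S. \<forall>d\<in>S. E a b c d \<longrightarrow> E a (m n c) (m n b) d) \<and>
     \<comment> \<open>SG5\<close>
     (\<forall>a\<in>S. \<forall>b\<in>S. \<forall>c\<in>S. \<forall>d\<in>S. \<forall>g\<in>S. E a b c d \<longrightarrow> E (m g a) (m g b) (m g c) (m g d)) \<and>
     \<comment> \<open>SG6: transitivity of the ternary relation\<close>
     (\<forall>a1\<in>S. \<forall>a2\<in>S. \<forall>a3\<in>S. \<forall>b1\<in>S. \<forall>b2\<in>S. \<forall>b3\<in>S. \<forall>c1\<in>S. \<forall>c2\<in>S. \<forall>c3\<in>S.
        sg_tern G a1 a2 a3 b1 b2 b3 \<and> sg_tern G b1 b2 b3 c1 c2 c3 \<longrightarrow> sg_tern G a1 a2 a3 c1 c2 c3))"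

definition sg_hom :: "('a, 'c) sgroup_scheme \<Rightarrow> ('b, 'd) sgroup_scheme \<Rightarrow> ('a \<Rightarrow> 'b) \<Rightarrow> bool" where
  "sg_hom G H f \<longleftrightarrow>
     (\<forall>a\<in>scarrier G. f a \<in> scarrier H) \<and>
     (\<forall>a\<in>scarrier G. \<forall>b\<in>scarrier G. f (smul G a b) = smul H (f a) (f b)) \<and>
     f (sminus G) = sminus H \<and>
     (\<forall>a\<in>scarrier G. \<forall>b\<in>scarrier G. \<forall>c\<in>scarrier G. \<forall>d\<in>scarrier G.
        seqv G a b c d \<longrightarrow> seqv H (f a) (f b) (f c) (f d))"

definition S_obj :: "('a, 'b) mring_scheme \<Rightarrow> 'a sgroup" where
  "S_obj F = \<lparr> scarrier = nonzeros F, smul = mmul F, sone = mone F, sminus = mneg F (mone F),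
               seqv = (\<lambda>a b c d. mmul F a b = mmul F c d \<and> a \<in> madd F c d) \<rparr>"

definition S_mor :: "('a, 'c) mring_scheme \<Rightarrow> ('a \<Rightarrow> 'b) \<Rightarrow> 'a \<Rightarrow> 'b" where
  "S_mor F \<sigma> = (\<lambda>x. if x \<in> nonzeros F then \<sigma> x else undefined)"

end

theory Submission
  imports Defs
begin

text \<open>Axioms (iii) and (iv) make \<open>ab = cd \<and> a \<in> c + d\<close> an equivalence relation on pairs
  of nonzero elements, and the other binary special group axioms are short computations with
  \<open>a\<^sup>2 = 1\<close> and \<open>a - a = F\<close>. The substance is (SG6): axiom (v) is precisely what allows
  the entries of a ternary form to be permuted, and once arbitrary permutations are available
  the witnesses of two consecutive ternary isometries recombine into one for their composite.
  A multiring morphism preserves inverses, hence nonzero elements, so it restricts to a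
  special group morphism.\<close>

definition form_isom :: "('a, 'b) mring_scheme \<Rightarrow> 'a \<Rightarrow> 'a \<Rightarrow> 'a \<Rightarrow> 'a \<Rightarrow> bool" where
  "form_isom R a b c d \<longleftrightarrow> mmul R a b = mmul R c d \<and> a \<in> madd R c d"

locale multiring_loc =
  fixes R :: "('a, 'b) mring_scheme"
  assumes multiring: "multiring R"
begin

abbreviation add (infixl "\<oplus>" 65) where "a \<oplus> b \<equiv> madd R a b"
abbreviation mul (infixl "\<otimes>" 70) where "a \<otimes> b \<equiv> mmul R a b"
abbreviation neg ("\<ominus> _" [80] 80) where "\<ominus> a \<equiv> mneg R a"
abbreviation zero ("\<zero>") where "\<zero> \<equiv> mzero R"
abbreviation one ("\<one>") where "\<one> \<equiv> mone R"

lemma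
  shows neg_closed: "a \<in> mcarrier R \<Longrightarrow> \<ominus> a \<in> mcarrier R"
    and zero_closed: "\<zero> \<in> mcarrier R"
    and one_closed: "\<one> \<in> mcarrier R"
    and mul_closed: "a \<in> mcarrier R \<Longrightarrow> b \<in> mcarrier R \<Longrightarrow> a \<otimes> b \<in> mcarrier R"
    and add_reverse:
      "\<lbrakk>x \<in> mcarrier R; y \<in> mcarrier R; z \<in> mcarrier R; z \<in> x \<oplus> y\<rbrakk> \<Longrightarrow> x \<in> z \<oplus> \<ominus> y"
    and zero_add_iff: "x \<in> mcarrier R \<Longrightarrow> y \<in> mcarrier R \<Longrightarrow> y \<in> \<zero> \<oplus> x \<longleftrightarrow> y = x"
    and add_commute: "a \<in> mcarrier R \<Longrightarrow> b \<in> mcarrier R \<Longrightarrow> a \<oplus> b = b \<oplus> a"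
    and mul_assoc:
      "\<lbrakk>a \<in> mcarrier R; b \<in> mcarrier R; c \<in> mcarrier R\<rbrakk> \<Longrightarrow> a \<otimes> b \<otimes> c = a \<otimes> (b \<otimes> c)"
    and mul_commute: "a \<in> mcarrier R \<Longrightarrow> b \<in> mcarrier R \<Longrightarrow> a \<otimes> b = b \<otimes> a"
    and mul_one: "a \<in> mcarrier R \<Longrightarrow> a \<otimes> \<one> = a"
    and mul_zero: "a \<in> mcarrier R \<Longrightarrow> a \<otimes> \<zero> = \<zero>"
    and mul_distrib:
      "\<lbrakk>a \<in> mcarrier R; b \<in> mcarrier R; c \<in> mcarrier R; d \<in> mcarrier R; c \<in> a \<oplus> b\<rbrakk>
       \<Longrightarrow> c \<otimes> d \<in> a \<otimes> d \<oplus> b \<otimes> d"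
  using multiring unfolding multiring_def Let_def by (auto simp only:)

lemma nonzero_closed: "a \<in> nonzeros R \<Longrightarrow> a \<in> mcarrier R"
  by (simp add: nonzeros_def)

lemma mul_left_commute:
  "\<lbrakk>a \<in> mcarrier R; b \<in> mcarrier R; c \<in> mcarrier R\<rbrakk> \<Longrightarrow> a \<otimes> (b \<otimes> c) = b \<otimes> (a \<otimes> c)"
  by (metis mul_assoc mul_commute)

lemmas mul_ac = mul_assoc mul_commute mul_left_commute

lemma one_mul: "a \<in> mcarrier R \<Longrightarrow> \<one> \<otimes> a = a"
  by (metis mul_commute mul_one one_closed)

lemma zero_mul: "a \<in> mcarrier R \<Longrightarrow> \<zero> \<otimes> a = \<zero>"
  by (metis mul_commute mul_zero zero_closed)

lemma zero_mem_add_neg: "a \<in> mcarrier R \<Longrightarrow> \<zero> \<in> a \<oplus> \<ominus> a"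
  using add_reverse zero_add_iff zero_closed by blast

lemma neg_neg: "a \<in> mcarrier R \<Longrightarrow> \<ominus> \<ominus> a = a"
  by (metis add_reverse neg_closed zero_add_iff zero_closed zero_mem_add_neg)

lemma neg_one_mul: "a \<in> mcarrier R \<Longrightarrow> \<ominus> \<one> \<otimes> a = \<ominus> a"
proof -
  assume a: "a \<in> mcarrier R"
  have neg_one_a: "\<ominus> \<one> \<otimes> a \<in> mcarrier R"
    using a by (simp add: mul_closed neg_closed one_closed)
  have "\<zero> \<otimes> a \<in> \<one> \<otimes> a \<oplus> \<ominus> \<one> \<otimes> a"
    using a by (simp add: mul_distrib zero_mem_add_neg one_closed neg_closed zero_closed)
  then have "\<zero> \<in> a \<oplus> \<ominus> \<one> \<otimes> a"
    using a by (simp add: zero_mul one_mul)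
  then have "a \<in> \<zero> \<oplus> \<ominus> (\<ominus> \<one> \<otimes> a)"
    using a neg_one_a by (simp add: add_reverse zero_closed)
  then have "a = \<ominus> (\<ominus> \<one> \<otimes> a)"
    using a neg_one_a by (simp add: zero_add_iff neg_closed)
  then show ?thesis
    using neg_one_a neg_neg by metis
qed

abbreviation isom :: "'a \<Rightarrow> 'a \<Rightarrow> 'a \<Rightarrow> 'a \<Rightarrow> bool" where
  "isom \<equiv> form_isom R"

definition isom3 :: "'a \<Rightarrow> 'a \<Rightarrow> 'a \<Rightarrow> 'a \<Rightarrow> 'a \<Rightarrow> 'a \<Rightarrow> bool" where
  "isom3 a1 a2 a3 b1 b2 b3 \<longleftrightarrow>
     (\<exists>x\<in>nonzeros R. \<exists>y\<in>nonzeros R. \<exists>z\<in>nonzeros R.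
        isom a1 x b1 y \<and> isom a2 a3 x z \<and> isom b2 b3 y z)"

lemma S_obj_simps:
  "scarrier (S_obj R) = nonzeros R" "smul (S_obj R) = mmul R" "sone (S_obj R) = \<one>"
  "sminus (S_obj R) = \<ominus> \<one>" "seqv (S_obj R) = isom"
  by (auto simp: S_obj_def form_isom_def fun_eq_iff)

lemma sg_tern_S_obj: "sg_tern (S_obj R) = isom3"
  by (auto simp: sg_tern_def isom3_def S_obj_simps fun_eq_iff)

end

locale multifield_loc =
  fixes R :: "('a, 'b) mring_scheme"
  assumes multifield: "multifield R"

sublocale multifield_loc \<subseteq> multiring_loc
  using multifield by unfold_locales (simp add: multifield_def)

context multifield_loc
begin

lemma one_neq_zero: "\<one> \<noteq> \<zero>"
  using multifield by (simp add: multifield_def)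

lemma nonzero_has_inverse: "a \<in> nonzeros R \<Longrightarrow> \<exists>b\<in>mcarrier R. a \<otimes> b = \<one>"
  using multifield by (simp add: multifield_def nonzeros_def)

lemma mul_nonzero: "a \<in> nonzeros R \<Longrightarrow> b \<in> nonzeros R \<Longrightarrow> a \<otimes> b \<in> nonzeros R"
proof -
  assume a: "a \<in> nonzeros R" and b: "b \<in> nonzeros R"
  then obtain a' where a': "a' \<in> mcarrier R" "a \<otimes> a' = \<one>"
    using nonzero_has_inverse by blast
  have aC: "a \<in> mcarrier R" and bC: "b \<in> mcarrier R"
    using a b by (simp_all add: nonzero_closed)
  have "a' \<otimes> (a \<otimes> b) = b"
    using a' aC bC by (simp add: mul_assoc[symmetric] mul_commute[of a' a] one_mul)
  then have "a \<otimes> b \<noteq> \<zero>"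
    using a' b by (auto simp: mul_zero nonzeros_def)
  then show ?thesis
    using aC bC by (simp add: nonzeros_def mul_closed)
qed

lemma one_nonzero: "\<one> \<in> nonzeros R"
  by (simp add: nonzeros_def one_closed one_neq_zero)

lemma neg_one_nonzero: "\<ominus> \<one> \<in> nonzeros R"
proof -
  have "\<zero> \<in> \<one> \<oplus> \<ominus> \<one>"
    by (simp add: zero_mem_add_neg one_closed)
  then have "\<ominus> \<one> \<noteq> \<zero>"
    using one_neq_zero zero_add_iff add_commute one_closed zero_closed by metis
  then show ?thesis
    by (simp add: nonzeros_def neg_closed one_closed)
qed

end

locale special_multifield_loc =
  fixes R :: "('a, 'b) mring_scheme"
  assumes special: "special_multifield R"

sublocale special_multifield_loc \<subseteq> multifield_loc
  using special by unfold_locales (simp add: special_multifield_def)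

context special_multifield_loc
begin

lemma square_eq_one: "a \<in> nonzeros R \<Longrightarrow> a \<otimes> a = \<one>"
  using special unfolding special_multifield_def Let_def by (elim conjE) fast

lemma add_neg_eq_carrier: "a \<in> nonzeros R \<Longrightarrow> a \<oplus> \<ominus> a = mcarrier R"
  using special unfolding special_multifield_def Let_def by (elim conjE) fast

lemma isom_sym:
  assumes "a \<in> nonzeros R" "b \<in> nonzeros R" "c \<in> nonzeros R" "d \<in> nonzeros R"
    and "isom a b c d"
  shows "isom c d a b"
proof -
  have "\<forall>a\<in>nonzeros R. \<forall>b\<in>nonzeros R. \<forall>c\<in>nonzeros R. \<forall>d\<in>nonzeros R.
      a \<otimes> b = c \<otimes> d \<and> a \<in> c \<oplus> d \<longrightarrow> c \<in> a \<oplus> b"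
    using special unfolding special_multifield_def Let_def by (elim conjE)
  with assms have "c \<in> a \<oplus> b"
    unfolding form_isom_def by blast
  with assms(5) show ?thesis
    by (simp add: form_isom_def)
qed

lemma isom_trans:
  assumes "a \<in> nonzeros R" "b \<in> nonzeros R" "c \<in> nonzeros R" "d \<in> nonzeros R"
    "e \<in> nonzeros R" "f \<in> nonzeros R" and "isom a b c d" "isom c d e f"
  shows "isom a b e f"
proof -
  have "\<forall>a\<in>nonzeros R. \<forall>b\<in>nonzeros R. \<forall>c\<in>nonzeros R. \<forall>d\<in>nonzeros R. \<forall>e\<in>nonzeros R.
      \<forall>f\<in>nonzeros R. a \<otimes> b = c \<otimes> d \<and> c \<otimes> d = e \<otimes> f \<and> a \<in> c \<oplus> d \<and> c \<in> e \<oplus> f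
      \<longrightarrow> a \<in> e \<oplus> f"
    using special unfolding special_multifield_def Let_def by (elim conjE)
  with assms have "a \<in> e \<oplus> f"
    unfolding form_isom_def by blast
  with assms(7,8) show ?thesis
    by (simp add: form_isom_def)
qed

lemma mul_self_cancel: "g \<in> nonzeros R \<Longrightarrow> t \<in> mcarrier R \<Longrightarrow> g \<otimes> (g \<otimes> t) = t"
  by (simp add: nonzero_closed square_eq_one one_mul flip: mul_assoc)

lemma mem_add_self: "a \<in> nonzeros R \<Longrightarrow> b \<in> nonzeros R \<Longrightarrow> a \<in> a \<oplus> b"
proof -
  assume a: "a \<in> nonzeros R" and b: "b \<in> nonzeros R"
  then have C: "a \<in> mcarrier R" "b \<in> mcarrier R"
    by (simp_all add: nonzero_closed)
  have "b \<in> a \<oplus> \<ominus> a"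
    using add_neg_eq_carrier[OF a] C by simp
  then have "a \<in> b \<oplus> \<ominus> \<ominus> a"
    using C by (simp add: add_reverse neg_closed)
  then show ?thesis
    using C by (simp add: neg_neg add_commute)
qed

lemma isom_refl: "a \<in> nonzeros R \<Longrightarrow> b \<in> nonzeros R \<Longrightarrow> isom a b a b"
  by (simp add: form_isom_def mem_add_self)

lemma isom_commute: "a \<in> nonzeros R \<Longrightarrow> b \<in> nonzeros R \<Longrightarrow> isom a b b a"
  by (simp add: form_isom_def mem_add_self mul_commute add_commute nonzero_closed)

lemma isom_swap_right:
  "\<lbrakk>c \<in> nonzeros R; d \<in> nonzeros R; isom a b c d\<rbrakk> \<Longrightarrow> isom a b d c"
  by (simp add: form_isom_def mul_commute add_commute nonzero_closed)

lemma isom_swap_left: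
  "\<lbrakk>a \<in> nonzeros R; b \<in> nonzeros R; c \<in> nonzeros R; d \<in> nonzeros R; isom a b c d\<rbrakk>
   \<Longrightarrow> isom b a c d"
  using isom_commute isom_trans by blast

lemma isom_mul:
  assumes g: "a \<in> nonzeros R" "b \<in> nonzeros R" "c \<in> nonzeros R" "d \<in> nonzeros R"
    "g \<in> nonzeros R" and e: "isom a b c d"
  shows "isom (g \<otimes> a) (g \<otimes> b) (g \<otimes> c) (g \<otimes> d)"
proof -
  have C: "a \<in> mcarrier R" "b \<in> mcarrier R" "c \<in> mcarrier R" "d \<in> mcarrier R"
    "g \<in> mcarrier R"
    using g by (simp_all add: nonzero_closed)
  have cancel: "(g \<otimes> x) \<otimes> (g \<otimes> y) = x \<otimes> y" if "x \<in> mcarrier R" "y \<in> mcarrier R" for x y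
    using that C by (simp add: mul_ac mul_closed mul_self_cancel[OF g(5)])
  have "a \<otimes> g \<in> c \<otimes> g \<oplus> d \<otimes> g"
    using e C by (simp add: form_isom_def mul_distrib)
  then show ?thesis
    using e C cancel by (simp add: form_isom_def mul_commute)
qed

lemma isom_hyperbolic: "a \<in> nonzeros R \<Longrightarrow> isom a (\<ominus> \<one> \<otimes> a) \<one> (\<ominus> \<one>)"
proof -
  assume a: "a \<in> nonzeros R"
  have C: "a \<in> mcarrier R" "\<ominus> \<one> \<in> mcarrier R"
    using a neg_one_nonzero by (simp_all add: nonzero_closed)
  have "a \<otimes> (\<ominus> \<one> \<otimes> a) = \<one> \<otimes> \<ominus> \<one>"
    using C by (simp add: mul_left_commute[OF C(1,2,1)] square_eq_one[OF a] mul_one one_mul)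
  moreover have "a \<in> \<one> \<oplus> \<ominus> \<one>"
    using add_neg_eq_carrier[OF one_nonzero] C by simp
  ultimately show ?thesis
    by (simp add: form_isom_def)
qed

lemma isom_exchange:
  assumes g: "a \<in> nonzeros R" "b \<in> nonzeros R" "c \<in> nonzeros R" "d \<in> nonzeros R"
    and e: "isom a b c d"
  shows "isom a (\<ominus> \<one> \<otimes> c) (\<ominus> \<one> \<otimes> b) d"
proof -
  have C: "a \<in> mcarrier R" "b \<in> mcarrier R" "c \<in> mcarrier R" "d \<in> mcarrier R"
    "\<ominus> \<one> \<in> mcarrier R"
    using g neg_one_nonzero by (simp_all add: nonzero_closed)
  have ab: "a \<otimes> b = c \<otimes> d"
    using e by (simp add: form_isom_def)
  have "a \<otimes> c = (a \<otimes> b) \<otimes> (b \<otimes> c)"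
    using C by (simp add: mul_assoc mul_closed mul_self_cancel[OF g(2)])
  also have "\<dots> = (c \<otimes> d) \<otimes> (c \<otimes> b)"
    using C by (simp add: ab mul_commute)
  also have "\<dots> = b \<otimes> d"
    using C by (simp add: mul_ac mul_closed mul_self_cancel[OF g(3)])
  finally have ac: "a \<otimes> c = b \<otimes> d" .
  have "a \<otimes> (\<ominus> \<one> \<otimes> c) = \<ominus> \<one> \<otimes> (a \<otimes> c)"
    using C by (simp add: mul_left_commute)
  also have "\<dots> = (\<ominus> \<one> \<otimes> b) \<otimes> d"
    using C by (simp add: ac mul_assoc)
  finally have "a \<otimes> (\<ominus> \<one> \<otimes> c) = (\<ominus> \<one> \<otimes> b) \<otimes> d" .
  moreover have "d \<in> a \<oplus> b"
    using isom_sym[OF g(1,2,4,3) isom_swap_right[OF g(3,4) e]] by (simp add: form_isom_def)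
  then have "a \<in> \<ominus> \<one> \<otimes> b \<oplus> d"
    using C by (simp add: add_reverse neg_one_mul add_commute neg_closed)
  ultimately show ?thesis
    by (simp add: form_isom_def)
qed

lemma isom3_det:
  assumes g: "a1 \<in> nonzeros R" "b1 \<in> nonzeros R" and t: "isom3 a1 a2 a3 b1 b2 b3"
  shows "a1 \<otimes> (a2 \<otimes> a3) = b1 \<otimes> (b2 \<otimes> b3)"
proof -
  from t obtain x y z where xyz: "x \<in> nonzeros R" "y \<in> nonzeros R" "z \<in> nonzeros R"
      "isom a1 x b1 y" "isom a2 a3 x z" "isom b2 b3 y z"
    unfolding isom3_def by blast
  have "a1 \<otimes> (a2 \<otimes> a3) = (a1 \<otimes> x) \<otimes> z"
    using xyz(1,3,5) g by (simp add: form_isom_def mul_assoc nonzero_closed)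
  also have "\<dots> = (b1 \<otimes> y) \<otimes> z"
    using xyz(4) by (simp add: form_isom_def)
  also have "\<dots> = b1 \<otimes> (b2 \<otimes> b3)"
    using xyz(2,3,6) g by (simp add: form_isom_def mul_assoc nonzero_closed)
  finally show ?thesis .
qed

lemma isom3_mul:
  assumes g: "a1 \<in> nonzeros R" "a2 \<in> nonzeros R" "a3 \<in> nonzeros R"
    "b1 \<in> nonzeros R" "b2 \<in> nonzeros R" "b3 \<in> nonzeros R" "g \<in> nonzeros R"
    and t: "isom3 a1 a2 a3 b1 b2 b3"
  shows "isom3 (g \<otimes> a1) (g \<otimes> a2) (g \<otimes> a3) (g \<otimes> b1) (g \<otimes> b2) (g \<otimes> b3)"
proof -
  from t obtain x y z where xyz: "x \<in> nonzeros R" "y \<in> nonzeros R" "z \<in> nonzeros R"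
      "isom a1 x b1 y" "isom a2 a3 x z" "isom b2 b3 y z"
    unfolding isom3_def by blast
  then show ?thesis
    unfolding isom3_def using g by (intro bexI[of _ "g \<otimes> x"] bexI[of _ "g \<otimes> y"]
        bexI[of _ "g \<otimes> z"] conjI isom_mul) (simp_all add: mul_nonzero)
qed

lemma isom3_sym:
  "\<lbrakk>a1 \<in> nonzeros R; b1 \<in> nonzeros R; isom3 a1 a2 a3 b1 b2 b3\<rbrakk> \<Longrightarrow> isom3 b1 b2 b3 a1 a2 a3"
  unfolding isom3_def by (meson isom_sym)

lemma isom3_swap23:
  "\<lbrakk>a2 \<in> nonzeros R; a3 \<in> nonzeros R; isom3 a1 a2 a3 b1 b2 b3\<rbrakk> \<Longrightarrow> isom3 a1 a3 a2 b1 b2 b3"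
  unfolding isom3_def by (meson isom_swap_left)

text \<open>Axiom (v) says exactly that the first two entries of a ternary form
  \<open>\<langle>a, b, ab\<rangle>\<close> may be swapped.\<close>

lemma isom3_swap12_normal:
  assumes g: "a \<in> nonzeros R" "b \<in> nonzeros R" "c \<in> nonzeros R" "d \<in> nonzeros R"
    and t: "isom3 a b (a \<otimes> b) c d (c \<otimes> d)"
  shows "isom3 b a (a \<otimes> b) c d (c \<otimes> d)"
proof -
  have C: "a \<in> mcarrier R" "b \<in> mcarrier R" "c \<in> mcarrier R" "d \<in> mcarrier R"
    using g by (simp_all add: nonzero_closed)
  have ab: "a \<otimes> (a \<otimes> b) = b" "b \<otimes> (a \<otimes> b) = a"
    using C by (simp_all add: mul_ac mul_closed square_eq_one g mul_one one_mul
        flip: mul_assoc)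
  have cd: "d \<otimes> (c \<otimes> d) = c"
    using C by (simp add: mul_ac mul_closed square_eq_one g mul_one)
  from t obtain x y z where xyz: "x \<in> nonzeros R" "y \<in> nonzeros R" "z \<in> nonzeros R"
      "isom a x c y" "isom b (a \<otimes> b) x z" "isom d (c \<otimes> d) y z"
    unfolding isom3_def by blast
  have axiom_v: "\<forall>a\<in>nonzeros R. \<forall>b\<in>nonzeros R. \<forall>c\<in>nonzeros R. \<forall>d\<in>nonzeros R.
      (\<exists>x\<in>nonzeros R. \<exists>y\<in>nonzeros R. \<exists>z\<in>nonzeros R. a \<otimes> x = c \<otimes> y \<and> a = x \<otimes> z \<and>
        c = y \<otimes> z \<and> a \<in> c \<oplus> y \<and> b \<in> x \<oplus> z \<and> d \<in> y \<oplus> z) \<longrightarrow>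
      (\<exists>t\<in>nonzeros R. \<exists>v\<in>nonzeros R. \<exists>w\<in>nonzeros R. b \<otimes> t = c \<otimes> v \<and> b = t \<otimes> w \<and>
        c = v \<otimes> w \<and> b \<in> c \<oplus> v \<and> a \<in> t \<oplus> w \<and> d \<in> v \<oplus> w)"
    using special unfolding special_multifield_def Let_def by (elim conjE)
  have "a \<otimes> x = c \<otimes> y" "a = x \<otimes> z" "c = y \<otimes> z" "a \<in> c \<oplus> y" "b \<in> x \<oplus> z" "d \<in> y \<oplus> z"
    using xyz ab cd unfolding form_isom_def by metis+
  then have "\<exists>t\<in>nonzeros R. \<exists>v\<in>nonzeros R. \<exists>w\<in>nonzeros R. b \<otimes> t = c \<otimes> v \<and> b = t \<otimes> w \<and>
      c = v \<otimes> w \<and> b \<in> c \<oplus> v \<and> a \<in> t \<oplus> w \<and> d \<in> v \<oplus> w"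
    using axiom_v g xyz(1-3) by blast
  then show ?thesis
    unfolding isom3_def form_isom_def using ab cd by metis
qed

text \<open>Multiplying by the common determinant \<open>d\<close> turns \<open>a3\<close> into
  \<open>(d a1)(d a2)\<close> and \<open>b3\<close> into \<open>(d b1)(d b2)\<close>, which is the situation of axiom (v).\<close>

lemma isom3_swap12:
  assumes g: "a1 \<in> nonzeros R" "a2 \<in> nonzeros R" "a3 \<in> nonzeros R"
    "b1 \<in> nonzeros R" "b2 \<in> nonzeros R" "b3 \<in> nonzeros R"
    and t: "isom3 a1 a2 a3 b1 b2 b3"
  shows "isom3 a2 a1 a3 b1 b2 b3"
proof -
  define d where "d = a1 \<otimes> (a2 \<otimes> a3)"
  have d_b: "d = b1 \<otimes> (b2 \<otimes> b3)"
    using isom3_det[OF g(1,4) t] by (simp add: d_def)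
  have C: "a1 \<in> mcarrier R" "a2 \<in> mcarrier R" "a3 \<in> mcarrier R"
    "b1 \<in> mcarrier R" "b2 \<in> mcarrier R" "b3 \<in> mcarrier R"
    using g by (simp_all add: nonzero_closed)
  have d: "d \<in> nonzeros R"
    unfolding d_def using g by (simp add: mul_nonzero)
  have a3: "d \<otimes> a3 = (d \<otimes> a1) \<otimes> (d \<otimes> a2)"
    unfolding d_def using C g by (simp add: mul_ac mul_closed mul_self_cancel)
  have b3: "d \<otimes> b3 = (d \<otimes> b1) \<otimes> (d \<otimes> b2)"
    unfolding d_b using C g by (simp add: mul_ac mul_closed mul_self_cancel)
  have dg: "d \<otimes> a1 \<in> nonzeros R" "d \<otimes> a2 \<in> nonzeros R" "d \<otimes> a3 \<in> nonzeros R"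
    "d \<otimes> b1 \<in> nonzeros R" "d \<otimes> b2 \<in> nonzeros R" "d \<otimes> b3 \<in> nonzeros R"
    using d g by (simp_all add: mul_nonzero)
  have "isom3 (d \<otimes> a1) (d \<otimes> a2) (d \<otimes> a3) (d \<otimes> b1) (d \<otimes> b2) (d \<otimes> b3)"
    using isom3_mul[OF g d t] .
  then have "isom3 (d \<otimes> a2) (d \<otimes> a1) (d \<otimes> a3) (d \<otimes> b1) (d \<otimes> b2) (d \<otimes> b3)"
    using isom3_swap12_normal[OF dg(1,2,4,5)] by (simp only: a3 b3)
  then have "isom3 (d \<otimes> (d \<otimes> a2)) (d \<otimes> (d \<otimes> a1)) (d \<otimes> (d \<otimes> a3))
      (d \<otimes> (d \<otimes> b1)) (d \<otimes> (d \<otimes> b2)) (d \<otimes> (d \<otimes> b3))"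
    using isom3_mul[OF dg(2,1,3-6) d] by blast
  then show ?thesis
    using d C by (simp add: mul_self_cancel)
qed

lemma isom3_swap13:
  assumes g: "a1 \<in> nonzeros R" "a2 \<in> nonzeros R" "a3 \<in> nonzeros R"
    "b1 \<in> nonzeros R" "b2 \<in> nonzeros R" "b3 \<in> nonzeros R"
    and t: "isom3 a1 a2 a3 b1 b2 b3"
  shows "isom3 a3 a2 a1 b3 b2 b1"
proof -
  have "isom3 a3 a2 a1 b1 b2 b3"
    using g t by (meson isom3_swap12 isom3_swap23)
  then have "isom3 b1 b2 b3 a3 a2 a1"
    using g by (meson isom3_sym)
  then have "isom3 b3 b2 b1 a3 a2 a1"
    using g by (meson isom3_swap12 isom3_swap23)
  then show ?thesis
    using g by (meson isom3_sym)
qed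

text \<open>The two witness triples combine into \<open>\<langle>z, x, a1\<rangle> \<equiv> \<langle>z', y', c1\<rangle>\<close>;
  permuting entries gives \<open>\<langle>a1, x, z\<rangle> \<equiv> \<langle>c1, y', z'\<rangle>\<close>, whose witnesses,
  chained with the original ones, witness \<open>\<langle>a1, a2, a3\<rangle> \<equiv> \<langle>c1, c2, c3\<rangle>\<close>.\<close>

lemma isom3_trans:
  assumes g: "a1 \<in> nonzeros R" "a2 \<in> nonzeros R" "a3 \<in> nonzeros R"
    "b1 \<in> nonzeros R" "b2 \<in> nonzeros R" "b3 \<in> nonzeros R"
    "c1 \<in> nonzeros R" "c2 \<in> nonzeros R" "c3 \<in> nonzeros R"
    and t1: "isom3 a1 a2 a3 b1 b2 b3" and t2: "isom3 b1 b2 b3 c1 c2 c3"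
  shows "isom3 a1 a2 a3 c1 c2 c3"
proof -
  from t1 obtain x y z where xyz: "x \<in> nonzeros R" "y \<in> nonzeros R" "z \<in> nonzeros R"
      "isom a1 x b1 y" "isom a2 a3 x z" "isom b2 b3 y z"
    unfolding isom3_def by blast
  from t2 obtain x' y' z' where xyz': "x' \<in> nonzeros R" "y' \<in> nonzeros R" "z' \<in> nonzeros R"
      "isom b1 x' c1 y'" "isom b2 b3 x' z'" "isom c2 c3 y' z'"
    unfolding isom3_def by blast
  note G = g xyz(1-3) xyz'(1-3)
  have "isom z y z' x'"
    using G xyz(6) xyz'(5) by (meson isom_sym isom_trans isom_swap_left isom_swap_right)
  moreover have "isom x a1 y b1"
    using G xyz(4) by (meson isom_swap_left isom_swap_right)
  moreover have "isom y' c1 x' b1"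
    using G xyz'(4) by (meson isom_sym isom_swap_left isom_swap_right)
  ultimately have "isom3 z x a1 z' y' c1"
    unfolding isom3_def using G by blast
  then have "isom3 a1 x z c1 y' z'"
    using G by (meson isom3_swap13)
  then obtain X Y Z where W: "X \<in> nonzeros R" "Y \<in> nonzeros R" "Z \<in> nonzeros R"
      "isom a1 X c1 Y" "isom x z X Z" "isom y' z' Y Z"
    unfolding isom3_def by blast
  have "isom a2 a3 X Z"
    using isom_trans[OF g(2,3) xyz(1,3) W(1,3) xyz(5) W(5)] .
  moreover have "isom c2 c3 Y Z"
    using isom_trans[OF g(8,9) xyz'(2,3) W(2,3) xyz'(6) W(6)] .
  ultimately show ?thesis
    unfolding isom3_def using W by blast
qed

lemma special_group_S_obj: "special_group (S_obj R)"
  unfolding special_group_def Let_def S_obj_simps sg_tern_S_obj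
proof (intro conjI ballI impI)
  fix a b c d assume "isom a b c d"
  then show "a \<otimes> b = c \<otimes> d"
    by (simp add: form_isom_def)
qed (auto simp: mul_nonzero one_nonzero neg_one_nonzero mul_assoc nonzero_closed one_mul mul_one
    square_eq_one isom_refl isom_sym isom_commute isom_hyperbolic isom_exchange isom_mul
    intro: isom_trans isom3_trans)

end

lemma mr_hom_nonzero:
  assumes F: "multifield F" and K: "multifield K" and \<sigma>: "mr_hom F K \<sigma>"
    and a: "a \<in> nonzeros F"
  shows "\<sigma> a \<in> nonzeros K"
proof -
  interpret F: multifield_loc F by (rule multifield_loc.intro, rule F)
  interpret K: multifield_loc K by (rule multifield_loc.intro, rule K)
  obtain b where b: "b \<in> mcarrier F" "mmul F a b = mone F"
    using F.nonzero_has_inverse[OF a] by blast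
  have "mmul K (\<sigma> a) (\<sigma> b) = mone K"
    using \<sigma> a b unfolding mr_hom_def by (metis F.nonzero_closed)
  then have "\<sigma> a \<noteq> mzero K"
    using \<sigma> b K.one_neq_zero K.zero_mul unfolding mr_hom_def by metis
  then show ?thesis
    using \<sigma> a unfolding mr_hom_def nonzeros_def by blast
qed

lemma mr_hom_isom:
  assumes \<sigma>: "mr_hom F K \<sigma>"
    and C: "a \<in> mcarrier F" "b \<in> mcarrier F" "c \<in> mcarrier F" "d \<in> mcarrier F"
    and e: "form_isom F a b c d"
  shows "form_isom K (\<sigma> a) (\<sigma> b) (\<sigma> c) (\<sigma> d)"
proof -
  have "mmul K (\<sigma> a) (\<sigma> b) = \<sigma> (mmul F a b)"
    using \<sigma> C unfolding mr_hom_def by simp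
  also have "\<dots> = \<sigma> (mmul F c d)"
    using e unfolding form_isom_def by simp
  also have "\<dots> = mmul K (\<sigma> c) (\<sigma> d)"
    using \<sigma> C unfolding mr_hom_def by simp
  finally show ?thesis
    using \<sigma> C e unfolding form_isom_def mr_hom_def by simp
qed

lemma sg_hom_S_mor:
  assumes F: "multifield F" and K: "multifield K" and \<sigma>: "mr_hom F K \<sigma>"
  shows "sg_hom (S_obj F) (S_obj K) (S_mor F \<sigma>)"
proof -
  interpret F: multifield_loc F by (rule multifield_loc.intro, rule F)
  interpret K: multifield_loc K by (rule multifield_loc.intro, rule K)
  have "\<sigma> (mneg F (mone F)) = mneg K (mone K)"
    using \<sigma> F.one_closed unfolding mr_hom_def by simp
  moreover have "\<sigma> (mmul F a b) = mmul K (\<sigma> a) (\<sigma> b)" if "a \<in> mcarrier F" "b \<in> mcarrier F" for a b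
    using \<sigma> that unfolding mr_hom_def by simp
  ultimately show ?thesis
    unfolding sg_hom_def F.S_obj_simps K.S_obj_simps S_mor_def
    by (auto simp: mr_hom_nonzero[OF F K \<sigma>] F.mul_nonzero F.neg_one_nonzero F.nonzero_closed
        intro: mr_hom_isom[OF \<sigma>])
qed

lemma S_mor_id: "x \<in> scarrier (S_obj F) \<Longrightarrow> S_mor F id x = x"
  by (simp add: S_obj_def S_mor_def)

lemma S_mor_comp:
  assumes "multifield F" "multifield K" "mr_hom F K \<sigma>" "x \<in> scarrier (S_obj F)"
  shows "S_mor F (\<tau> \<circ> \<sigma>) x = (S_mor K \<tau> \<circ> S_mor F \<sigma>) x"
  using assms mr_hom_nonzero[OF assms(1-3)] by (simp add: S_obj_def S_mor_def)

lemma special_multifield_imp_multifield: "special_multifield F \<Longrightarrow> multifield F"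
  by (simp add: special_multifield_def)

theorem corollary5p11:
  shows "(\<forall>F :: ('a, 'x) mring_scheme. special_multifield F \<longrightarrow> special_group (S_obj F)) \<and>
    (\<forall>(F :: ('a, 'x) mring_scheme) (K :: ('b, 'y) mring_scheme) \<sigma>.
        special_multifield F \<and> special_multifield K \<and> mr_hom F K \<sigma> \<longrightarrow>
        sg_hom (S_obj F) (S_obj K) (S_mor F \<sigma>)) \<and>
    (\<forall>F :: ('a, 'x) mring_scheme. special_multifield F \<longrightarrow>
        (\<forall>x\<in>scarrier (S_obj F). S_mor F id x = id x)) \<and>
    (\<forall>(F :: ('a, 'x) mring_scheme) (K :: ('b, 'y) mring_scheme) (L :: ('c, 'z) mring_scheme) \<sigma> \<tau>.
        special_multifield F \<and> special_multifield K \<and> special_multifield L \<and>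
        mr_hom F K \<sigma> \<and> mr_hom K L \<tau> \<longrightarrow>
        (\<forall>x\<in>scarrier (S_obj F). S_mor F (\<tau> \<circ> \<sigma>) x = (S_mor K \<tau> \<circ> S_mor F \<sigma>) x))"
proof (intro conjI allI impI ballI)
  fix F :: "('a, 'x) mring_scheme"
  assume "special_multifield F"
  then show "special_group (S_obj F)"
    by (intro special_multifield_loc.special_group_S_obj special_multifield_loc.intro)
next
  fix F :: "('a, 'x) mring_scheme" and K :: "('b, 'y) mring_scheme" and \<sigma>
  assume "special_multifield F \<and> special_multifield K \<and> mr_hom F K \<sigma>"
  then show "sg_hom (S_obj F) (S_obj K) (S_mor F \<sigma>)"
    by (meson sg_hom_S_mor special_multifield_imp_multifield)
next
  fix F :: "('a, 'x) mring_scheme" and x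
  assume "x \<in> scarrier (S_obj F)"
  then show "S_mor F id x = id x"
    by (simp add: S_mor_id)
next
  fix F :: "('a, 'x) mring_scheme" and K :: "('b, 'y) mring_scheme"
    and L :: "('c, 'z) mring_scheme" and \<sigma> \<tau> x
  assume "special_multifield F \<and> special_multifield K \<and> special_multifield L \<and>
    mr_hom F K \<sigma> \<and> mr_hom K L \<tau>" and "x \<in> scarrier (S_obj F)"
  then show "S_mor F (\<tau> \<circ> \<sigma>) x = (S_mor K \<tau> \<circ> S_mor F \<sigma>) x"
    by (meson S_mor_comp special_multifield_imp_multifield)
qed

end
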